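(* Let $\rho_0=\sqrt{1+e^{W_0(2/e^2)+2}}$ and let $b\mapsto\rho_b$ ($b\ge0$) be the solution of the ordinary differential equation $\frac{d}{db}\rho_b=\frac{\rho_b}{2\rho_b+b}\left(1-\frac{2}{\rho_b^2+1}\right)$ with initial value $\rho_0$ at $b=0$. Then for every $b>0$, $$\max\left(\rho_0,\ \frac45\cdot\frac{b}{2W_0\!\left(\frac{b}{2\rho_0}\right)}\right)\le\rho_b\le\frac{b}{2W_0\!\left(\frac{b}{2\rho_0}\right)}.$$
   Context: $W_0$ is the principal branch of the Lambert W function: for $z>-1/e$, $W_0(z)$ is the unique $w>-1$ with $we^w=z$. *)

theory Defs
  imports Complex_Main
begin

definition lambertW0 :: "real \<Rightarrow> real" where
  "lambertW0 z = (THE w. w > -1 \<and> w * exp w = z)"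

definition rho0 :: real where
  "rho0 = sqrt (1 + exp (lambertW0 (2 / exp 2) + 2))"

end

(* Write damped t x = x exp (-t / (2 x)) and consider Psi_c(t) = damped t (c rho(t)).
   Along the ODE, Psi_1' = -exp(-t / (2 rho)) / (rho^2 + 1) <= 0, so Psi_1(b) <= rho0, while
   Psi_(5/4) has positive derivative wherever it equals rho0 and hence never drops below rho0.
   Since x -> damped b x is increasing and equals rho0 exactly at x = b / (2 W0(b / (2 rho0))),
   these two facts give the upper bound and the lower bound 4/5 of it; rho >= rho0 holds because
   rho' > 0 wherever rho = rho0 > 1. All that is used about rho0 is rho0 >= 3. *)

theory Submission
  imports Defs "HOL-Analysis.Analysis"
begin

lemma DERIV_within_atLeast_nonneg_imp_le:
  fixes g g' :: "real \<Rightarrow> real"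
  assumes deriv: "\<And>t. a \<le> t \<Longrightarrow> (g has_real_derivative g' t) (at t within {a..})"
    and nonneg: "\<And>t. x < t \<Longrightarrow> t < y \<Longrightarrow> 0 \<le> g' t"
    and "a \<le> x" "x \<le> y"
  shows "g x \<le> g y"
proof (rule DERIV_nonneg_imp_increasing_open[OF \<open>x \<le> y\<close>])
  fix t assume t: "x < t" "t < y"
  then have "at t within {a..} = at t"
    using \<open>a \<le> x\<close> by (intro at_within_interior) auto
  then show "\<exists>d. (g has_real_derivative d) (at t) \<and> 0 \<le> d"
    using deriv[of t] nonneg[OF t] t \<open>a \<le> x\<close> by auto
next
  have "continuous_on {a..} g"
    by (rule DERIV_continuous_on) (use deriv in auto)
  then show "continuous_on {x..y} g"
    by (rule continuous_on_subset) (use \<open>a \<le> x\<close> in auto)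
qed

text \<open>If g x < c, take the last t before x with g t = c: just right of t the positive
  derivative lifts g above c, and the intermediate value theorem yields a later zero of g - c.\<close>

lemma DERIV_pos_at_level_imp_ge:
  fixes g g' :: "real \<Rightarrow> real"
  assumes deriv: "\<And>t. a \<le> t \<Longrightarrow> (g has_real_derivative g' t) (at t within {a..})"
    and start: "c \<le> g a"
    and crossing: "\<And>t. a \<le> t \<Longrightarrow> g t = c \<Longrightarrow> 0 < g' t"
    and "a \<le> x"
  shows "c \<le> g x"
proof (rule ccontr)
  assume below: "\<not> c \<le> g x"
  have cont: "continuous_on {a..} g"
    by (rule DERIV_continuous_on) (use deriv in auto)
  then have cont_on: "continuous_on {s..x} g" if "a \<le> s" for s
    by (rule continuous_on_subset) (use that in auto)
  define Z where "Z = {s \<in> {a..x}. g s = c}"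
  have "\<exists>s. a \<le> s \<and> s \<le> x \<and> g s = c"
    using below start \<open>a \<le> x\<close> by (intro IVT2' cont_on) auto
  then have "Z \<noteq> {}" unfolding Z_def by auto
  moreover have "bdd_above Z" unfolding Z_def by auto
  moreover have "closed Z"
    unfolding Z_def by (intro continuous_closed_preimage_constant cont_on) auto
  ultimately have "Sup Z \<in> Z" by (rule closed_contains_Sup)
  define t where "t = Sup Z"
  have last: "s \<le> t" if "s \<in> Z" for s
    unfolding t_def using that \<open>bdd_above Z\<close> by (rule cSup_upper)
  have "t \<in> Z" unfolding t_def by fact
  then have t: "a \<le> t" "t \<le> x" "g t = c" unfolding Z_def by auto
  then have "t < x" using below by (cases "t = x") auto
  obtain d where "0 < d"
    and up: "\<And>h. 0 < h \<Longrightarrow> t + h \<in> {a..} \<Longrightarrow> h < d \<Longrightarrow> g t < g (t + h)"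
    using has_real_derivative_pos_inc_right[OF deriv[OF t(1)] crossing[OF t(1,3)]] by blast
  define h where "h = min d (x - t) / 2"
  have h: "0 < h" "h < d" "t + h \<le> x"
    using \<open>t < x\<close> \<open>0 < d\<close> unfolding h_def by (auto simp: min_def field_simps)
  define s where "s = t + h"
  have s: "t < s" "s \<le> x" "c < g s"
    using up[OF h(1) _ h(2)] h t unfolding s_def by auto
  then have "\<exists>r. s \<le> r \<and> r \<le> x \<and> g r = c"
    using below t by (intro IVT2' cont_on) auto
  then obtain r where "s \<le> r" "r \<in> Z" using s t unfolding Z_def by auto
  then show False using last[of r] s by simp
qed

lemma xexp_strict_mono:
  fixes x y :: real
  assumes "-1 \<le> x" "x < y"
  shows "x * exp x < y * exp y"
proof (rule DERIV_pos_imp_increasing_open[OF \<open>x < y\<close>])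
  fix t :: real assume "x < t" "t < y"
  then have "0 < (t + 1) * exp t" using assms by simp
  then show "\<exists>d. ((\<lambda>t. t * exp t) has_real_derivative d) (at t) \<and> 0 < d"
    by (intro exI[of _ "(t + 1) * exp t"]) (auto intro!: derivative_eq_intros simp: algebra_simps)
qed (intro continuous_intros)

lemma lambertW0_eqI:
  fixes w :: real
  assumes "-1 < w"
  shows "lambertW0 (w * exp w) = w"
  unfolding lambertW0_def
proof (rule the_equality)
  fix v :: real assume v: "-1 < v \<and> v * exp v = w * exp w"
  then show "v = w"
    using xexp_strict_mono[of v w] xexp_strict_mono[of w v] assms
    by (cases v w rule: linorder_cases) auto
qed (use assms in simp)

lemma lambertW0_pos_exp:
  fixes z :: real
  assumes "0 < z"
  shows "0 < lambertW0 z" and "lambertW0 z * exp (lambertW0 z) = z"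
proof -
  have "\<exists>w. 0 \<le> w \<and> w \<le> z \<and> w * exp w = z"
    by (rule IVT') (use assms in \<open>auto intro!: continuous_intros\<close>)
  then obtain w where w: "0 \<le> w" "w * exp w = z" by blast
  then have "lambertW0 z = w" using lambertW0_eqI[of w] by simp
  moreover have "0 < w" using w assms by (auto intro: ccontr)
  ultimately show "0 < lambertW0 z" "lambertW0 z * exp (lambertW0 z) = z" using w by simp_all
qed

definition damped :: "real \<Rightarrow> real \<Rightarrow> real" where
  "damped b x = x * exp (- b / (2 * x))"

lemma damped_strict_mono:
  assumes "0 < b" "0 < x" "x < y"
  shows "damped b x < damped b y"
proof -
  have "b / (2 * y) < b / (2 * x)" using assms by (intro divide_strict_left_mono) auto
  then show ?thesis unfolding damped_def using assms by (intro mult_strict_mono) auto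
qed

lemma damped_le_iff:
  assumes "0 < b" "0 < x" "0 < y"
  shows "damped b x \<le> damped b y \<longleftrightarrow> x \<le> y"
  using damped_strict_mono[of b x y] damped_strict_mono[of b y x] assms
  by (cases x y rule: linorder_cases) auto

text \<open>This is where the Lambert function enters: damped b (b / (2 w)) = r is the equation
  w exp w = b / (2 r).\<close>

lemma damped_lambertW0:
  assumes "0 < b" "0 < r"
  shows "damped b (b / (2 * lambertW0 (b / (2 * r)))) = r"
proof -
  define w where "w = lambertW0 (b / (2 * r))"
  have w: "0 < w" "w * exp w = b / (2 * r)"
    using lambertW0_pos_exp[of "b / (2 * r)"] assms unfolding w_def by auto
  then have "b / (2 * w) = r * exp w" using assms by (simp add: field_simps)
  moreover have "b / (2 * (b / (2 * w))) = w" using w assms by simp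
  ultimately show ?thesis unfolding damped_def w_def[symmetric] by (simp add: exp_minus)
qed

lemma damped_scale_ge:
  assumes "1 \<le> c" "0 < x" "0 \<le> t"
  shows "c * damped t x \<le> damped t (c * x)"
proof -
  have "t / (2 * (c * x)) \<le> t / (2 * x)"
    using assms by (intro divide_left_mono) auto
  then show ?thesis unfolding damped_def using assms by simp
qed

lemma has_real_derivative_damped:
  assumes "(X has_real_derivative X') (at t within S)" "X t \<noteq> 0"
  shows "((\<lambda>s. damped s (X s)) has_real_derivative
           exp (- t / (2 * X t)) * (X' * (1 + t / (2 * X t)) - 1/2)) (at t within S)"
  unfolding damped_def using assms
  by (auto intro!: derivative_eq_intros simp: field_simps power2_eq_square)

text \<open>At a time t where damped t (5/4 rho t) = r0, with v = t / (5/2 rho t), one has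
  rho t = 4/5 r0 exp v and v exp v >= 1; the bound below on rho^2 + 1 is exactly what makes
  the derivative of damped t (5/4 rho t) positive there.\<close>

lemma crossing_estimate:
  fixes r v :: real
  assumes "3 \<le> r" "1 \<le> v * exp v"
  shows "10 * (1 + v) < (4/5 * r * exp v)\<^sup>2 + 1"
proof -
  have "exp (1/2::real) ^ 2 < 2 ^ 2"
    using exp_le by (simp flip: exp_of_nat_mult)
  then have "exp (1/2::real) < 2" by (rule power2_less_imp_less) simp
  have "0 < v"
  proof (rule ccontr)
    assume "\<not> 0 < v"
    then have "v * exp v \<le> 0" by (simp add: mult_nonpos_nonneg)
    then show False using assms(2) by simp
  qed
  have v: "1/2 < v"
  proof (rule ccontr)
    assume "\<not> 1/2 < v"
    then have "v * exp v \<le> 1/2 * exp (1/2)" using \<open>0 < v\<close> by (intro mult_mono) auto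
    then show False using assms(2) \<open>exp (1/2) < 2\<close> by simp
  qed
  have "1 + 2 * v + 2 * v\<^sup>2 \<le> exp v ^ 2"
    using exp_lower_Taylor_quadratic[of "2 * v"] v by (simp add: power2_eq_square flip: exp_add)
  then have "9 * (1 + 2 * v + 2 * v\<^sup>2) \<le> r\<^sup>2 * exp v ^ 2"
    using assms(1) power_mono[of 3 r 2] v by (intro mult_mono) auto
  moreover have "v \<le> 2 * v\<^sup>2" using v by (simp add: power2_eq_square)
  ultimately have "10 * (1 + v) < 16/25 * (r\<^sup>2 * exp v ^ 2) + 1"
    using v unfolding distrib_left by linarith
  also have "16/25 * (r\<^sup>2 * exp v ^ 2) = (4/5 * r * exp v)\<^sup>2"
    by (simp add: power2_eq_square)
  finally show ?thesis .
qed

locale rho_ode =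
  fixes rho :: "real \<Rightarrow> real" and r0 :: real
  assumes rho_0: "rho 0 = r0"
    and r0_ge_3: "3 \<le> r0"
    and ode: "\<And>b. 0 \<le> b \<Longrightarrow>
      (rho has_real_derivative (rho b / (2 * rho b + b) * (1 - 2 / ((rho b)\<^sup>2 + 1)))) (at b within {0..})"
begin

definition rho' :: "real \<Rightarrow> real" where
  "rho' b = rho b / (2 * rho b + b) * (1 - 2 / ((rho b)\<^sup>2 + 1))"

lemma rho_deriv: "0 \<le> t \<Longrightarrow> (rho has_real_derivative rho' t) (at t within {0..})"
  unfolding rho'_def by (rule ode)

lemma rho_ge_init:
  assumes "0 \<le> t"
  shows "r0 \<le> rho t"
proof (rule DERIV_pos_at_level_imp_ge[OF rho_deriv _ _ assms])
  fix s :: real assume "0 \<le> s" "rho s = r0"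
  moreover have "2 / (r0\<^sup>2 + 1) < 1"
    using r0_ge_3 power_mono[of 3 r0 2] by simp
  ultimately show "0 < rho' s"
    unfolding rho'_def using r0_ge_3 by simp
next
  show "r0 \<le> rho 0" by (simp add: rho_0)
qed

lemma rho_pos: "0 \<le> t \<Longrightarrow> 0 < rho t"
  using rho_ge_init r0_ge_3 by fastforce

lemma damped_rho_deriv:
  assumes "0 \<le> t"
  shows "((\<lambda>s. damped s (rho s)) has_real_derivative
      - exp (- t / (2 * rho t)) / ((rho t)\<^sup>2 + 1)) (at t within {0..})"
proof (rule DERIV_cong[OF has_real_derivative_damped[OF rho_deriv[OF assms]]])
  define q where "q = 1 - 2 / ((rho t)\<^sup>2 + 1)"
  have "rho' t * (1 + t / (2 * rho t)) = rho t / (2 * rho t + t) * q * ((2 * rho t + t) / (2 * rho t))"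
    using rho_pos[OF assms] unfolding rho'_def q_def by (simp add: field_simps)
  also have "\<dots> = q / 2"
    using rho_pos[OF assms] assms by (simp add: add_pos_nonneg)
  also have "\<dots> = 1/2 - 1 / ((rho t)\<^sup>2 + 1)"
    unfolding q_def by (simp add: field_simps)
  finally show "exp (- t / (2 * rho t)) * (rho' t * (1 + t / (2 * rho t)) - 1/2)
    = - exp (- t / (2 * rho t)) / ((rho t)\<^sup>2 + 1)"
    by simp
qed (use rho_pos[OF assms] in simp)

lemma damped_rho_le_init:
  assumes "0 \<le> t"
  shows "damped t (rho t) \<le> r0"
proof -
  have "- damped 0 (rho 0) \<le> - damped t (rho t)"
    by (rule DERIV_within_atLeast_nonneg_imp_le[OF DERIV_minus[OF damped_rho_deriv]])
      (use assms in auto)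
  then show ?thesis by (simp add: damped_def rho_0)
qed

lemma damped_rho_ge:
  assumes "0 \<le> t"
  shows "r0 - t / (r0\<^sup>2 + 1) \<le> damped t (rho t)"
proof -
  have "damped 0 (rho 0) + 0 / (r0\<^sup>2 + 1) \<le> damped t (rho t) + t / (r0\<^sup>2 + 1)"
  proof (rule DERIV_within_atLeast_nonneg_imp_le[where g = "\<lambda>s. damped s (rho s) + s / (r0\<^sup>2 + 1)"])
    fix s :: real assume "0 \<le> s"
    then show "((\<lambda>s. damped s (rho s) + s / (r0\<^sup>2 + 1)) has_real_derivative
        - exp (- s / (2 * rho s)) / ((rho s)\<^sup>2 + 1) + 1 / (r0\<^sup>2 + 1)) (at s within {0..})"
      using add_pos_nonneg[of 1 "r0\<^sup>2"] by (auto intro!: derivative_eq_intros damped_rho_deriv)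
  next
    fix s :: real assume "0 < s"
    then have "exp (- s / (2 * rho s)) \<le> 1" using rho_pos[of s] by simp
    moreover have "r0\<^sup>2 \<le> (rho s)\<^sup>2"
      using rho_ge_init[of s] r0_ge_3 \<open>0 < s\<close> by (intro power_mono) auto
    ultimately have "exp (- s / (2 * rho s)) / ((rho s)\<^sup>2 + 1) \<le> 1 / (r0\<^sup>2 + 1)"
      using add_pos_nonneg[of 1 "r0\<^sup>2"] by (intro frac_le) auto
    then show "0 \<le> - exp (- s / (2 * rho s)) / ((rho s)\<^sup>2 + 1) + 1 / (r0\<^sup>2 + 1)"
      by simp
  qed (use assms in auto)
  then show ?thesis by (simp add: damped_def rho_0)
qed

lemma crossing_time_ge:
  assumes "0 \<le> t" "damped t (5/4 * rho t) = r0"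
  shows "r0 * (r0\<^sup>2 + 1) / 5 \<le> t"
proof -
  have "5/4 * (r0 - t / (r0\<^sup>2 + 1)) \<le> 5/4 * damped t (rho t)"
    using damped_rho_ge[OF assms(1)] by simp
  also have "\<dots> \<le> r0"
    using damped_scale_ge[of "5/4" "rho t" t] rho_pos assms by simp
  finally show ?thesis
    using r0_ge_3 add_pos_nonneg[of 1 "r0\<^sup>2"] by (simp add: field_simps)
qed

lemma crossing_slope_pos:
  assumes "0 \<le> t" "damped t (5/4 * rho t) = r0"
  shows "0 < 5/4 * rho' t * (1 + t / (2 * (5/4 * rho t))) - 1/2"
proof -
  define p where "p = rho t"
  define v where "v = t / (2 * (5/4 * p))"
  have p: "0 < p" "0 < p\<^sup>2 + 1"
    unfolding p_def using rho_pos[OF assms(1)] by (simp_all add: add_pos_nonneg)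
  have v: "0 \<le> v" unfolding v_def using p assms(1) by simp
  have t_eq: "t = 5/2 * p * v" unfolding v_def using p by simp
  have "5/4 * p * exp (- v) = r0" using assms(2) unfolding damped_def v_def p_def by simp
  then have p_eq: "p = 4/5 * r0 * exp v" by (simp add: exp_minus field_simps)
  have "r0 * (r0\<^sup>2 + 1) / 5 \<le> 2 * r0 * (v * exp v)"
    using crossing_time_ge[OF assms] unfolding t_eq p_eq by (simp add: mult_ac)
  then have "r0 * ((r0\<^sup>2 + 1) / 10) \<le> r0 * (v * exp v)" by simp
  then have "(r0\<^sup>2 + 1) / 10 \<le> v * exp v" using r0_ge_3 by simp
  moreover have "9 \<le> r0\<^sup>2" using power_mono[OF r0_ge_3, of 2] by simp
  ultimately have "10 * (1 + v) < p\<^sup>2 + 1"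
    unfolding p_eq by (intro crossing_estimate[OF r0_ge_3]) simp
  then have "2 / (p\<^sup>2 + 1) < 1 / (5 * (1 + v))"
    using v p by (simp add: field_simps)
  then have "1/2 * (2 + 5/2 * v) < 5/4 * (1 - 2 / (p\<^sup>2 + 1)) * (1 + v)"
    using v p by (simp add: field_simps)
  then have "1/2 < 5/4 * (1 - 2 / (p\<^sup>2 + 1)) * (1 + v) / (2 + 5/2 * v)"
    using v by (simp add: pos_less_divide_eq)
  moreover have "2 * p + t = p * (2 + 5/2 * v)" unfolding t_eq by (simp add: algebra_simps)
  then have "rho' t = p / (p * (2 + 5/2 * v)) * (1 - 2 / (p\<^sup>2 + 1))"
    unfolding rho'_def p_def[symmetric] by simp
  moreover have "1 + t / (2 * (5/4 * rho t)) = 1 + v" unfolding v_def p_def ..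
  ultimately show ?thesis using p by simp
qed

lemma damped_scaled_rho_deriv:
  assumes "0 \<le> t"
  shows "((\<lambda>s. damped s (5/4 * rho s)) has_real_derivative
      exp (- t / (2 * (5/4 * rho t))) * (5/4 * rho' t * (1 + t / (2 * (5/4 * rho t))) - 1/2))
    (at t within {0..})"
  using rho_pos[OF assms]
  by (intro has_real_derivative_damped[where X = "\<lambda>s. 5/4 * rho s"] DERIV_cmult rho_deriv assms)
    simp

lemma damped_scaled_rho_ge_init:
  assumes "0 \<le> t"
  shows "r0 \<le> damped t (5/4 * rho t)"
proof (rule DERIV_pos_at_level_imp_ge[OF damped_scaled_rho_deriv _ _ assms])
  show "r0 \<le> damped 0 (5/4 * rho 0)" using r0_ge_3 by (simp add: damped_def rho_0)
next
  fix s :: real assume "0 \<le> s" "damped s (5/4 * rho s) = r0"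
  then show "0 < exp (- s / (2 * (5/4 * rho s))) * (5/4 * rho' s * (1 + s / (2 * (5/4 * rho s))) - 1/2)"
    by (intro mult_pos_pos exp_gt_zero crossing_slope_pos)
qed

lemma rho_le_lambert_bound:
  assumes "0 < b"
  shows "rho b \<le> b / (2 * lambertW0 (b / (2 * r0)))"
proof -
  define u where "u = b / (2 * lambertW0 (b / (2 * r0)))"
  have "0 < u" unfolding u_def using lambertW0_pos_exp(1) assms r0_ge_3 by simp
  moreover have "damped b (rho b) \<le> damped b u"
    unfolding u_def using damped_lambertW0 damped_rho_le_init assms r0_ge_3 by simp
  ultimately show ?thesis
    unfolding u_def[symmetric] using damped_le_iff rho_pos assms by simp
qed

lemma lambert_bound_le_rho:
  assumes "0 < b"
  shows "4/5 * (b / (2 * lambertW0 (b / (2 * r0)))) \<le> rho b"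
proof -
  define u where "u = b / (2 * lambertW0 (b / (2 * r0)))"
  have "0 < u" unfolding u_def using lambertW0_pos_exp(1) assms r0_ge_3 by simp
  moreover have "damped b u \<le> damped b (5/4 * rho b)"
    unfolding u_def using damped_lambertW0 damped_scaled_rho_ge_init assms r0_ge_3 by simp
  ultimately have "u \<le> 5/4 * rho b"
    using damped_le_iff rho_pos assms by simp
  then show ?thesis unfolding u_def by simp
qed

end

lemma rho0_gt_3: "3 < rho0"
proof -
  define W where "W = lambertW0 (2 / exp 2)"
  have W: "0 < W" "W * exp W = 2 / exp 2"
    using lambertW0_pos_exp[of "2 / exp 2"] unfolding W_def by auto
  have "(65/32::real) ^ 3 \<le> exp (3/4) ^ 3"
    using exp_lower_Taylor_quadratic[of "3/4::real"] by (intro power_mono) (auto simp: power2_eq_square)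
  also have "\<dots> = exp (1/4) * exp 2" by (simp flip: exp_of_nat_mult exp_add)
  finally have "2 / exp 2 < 1/4 * exp (1/4::real)" by (simp add: field_simps)
  then have "W < 1/4"
    using mult_mono[of "1/4" W "exp (1/4)" "exp W"] W by force
  have "rho0\<^sup>2 = 1 + exp W * exp 2" unfolding rho0_def W_def[symmetric] by (simp add: exp_add)
  also have "exp W * exp 2 = 2 / W" using W by (simp add: field_simps)
  finally have "rho0\<^sup>2 = 1 + 2 / W" .
  moreover have "8 < 2 / W" using W \<open>W < 1/4\<close> by (simp add: field_simps)
  ultimately have "3\<^sup>2 < rho0\<^sup>2" by simp
  then show ?thesis unfolding rho0_def by (rule power2_less_imp_less) simp
qed

theorem corollaryG1:
  fixes rho :: "real \<Rightarrow> real"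
  assumes init: "rho 0 = rho0"
    and ode: "\<And>b. b \<ge> 0 \<Longrightarrow>
      (rho has_real_derivative
         (rho b / (2 * rho b + b) * (1 - 2 / ((rho b)\<^sup>2 + 1)))) (at b within {0..})"
    and bpos: "b > 0"
  shows "max rho0 (4/5 * (b / (2 * lambertW0 (b / (2 * rho0))))) \<le> rho b
         \<and> rho b \<le> b / (2 * lambertW0 (b / (2 * rho0)))"
proof -
  interpret rho_ode rho rho0
    using init rho0_gt_3 ode by unfold_locales auto
  show ?thesis
    using rho_ge_init lambert_bound_le_rho rho_le_lambert_bound bpos by simp
qed

end
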